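(* Fix $l,r>0$, $0<\alpha<\beta<1$ and $Q_0\in\mathbb{R}$. Let $A^*\in(0,A_M)$ be the point with $B(A^* )=A^*$ and set $B^*=B(A^* )$; let $\hat A\in(0,A_M)$ be the point with $N(\hat A)=0$ and set $\hat B=B(\hat A)$. Then: (i) if $l<r$ then $l<\hat A<A^*=B^*<\hat B<r$; (ii) if $l>r$ then $l>\hat A>A^*=B^*>\hat B>r$; (iii) if $l=r$ then $\hat A=\hat B=A^*=B^*=l=r$.
   Context: For $A\in(0,A_M)$, where $A_M=l+\frac{\alpha}{1-\beta}r$, define $B=B(A)=\frac{1-\beta}{\alpha}(l-A)+r$ (so $B>0$ on this interval), $S_a=\sqrt{Q_0^2+A^2}$, $S_b=\sqrt{Q_0^2+B^2}$ and $N=N(A)=A-l+S_a-S_b$. (Here $A,B$ represent geometric means of the two ion concentrations at the points $x=a$ and $x=b$ in a zero-current Poisson–Nernst–Planck model with boundary concentrations $l,r$, permanent charge $2Q_0$ on $(a,b)$, and $\alpha=H(a)/H(1)$, $\beta=H(b)/H(1)$, $H(x)=\int_0^x ds/h(s)$.) The function $B(A)-A$ is strictly decreasing, positive near $0^+$ and negative near $A_M^-$, so $A^*$ exists uniquely; $N$ is strictly increasing in $A$ with $N(0^+)<0<N(A_M^-)$, so $\hat A$ exists uniquely. *)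

theory Defs
  imports Complex_Main
begin

definition A_M :: "real \<Rightarrow> real \<Rightarrow> real \<Rightarrow> real \<Rightarrow> real" where
  "A_M l r \<alpha> \<beta> = l + \<alpha> / (1 - \<beta>) * r"

definition Bfun :: "real \<Rightarrow> real \<Rightarrow> real \<Rightarrow> real \<Rightarrow> real \<Rightarrow> real" where
  "Bfun l r \<alpha> \<beta> A = (1 - \<beta>) / \<alpha> * (l - A) + r"

definition Nfun :: "real \<Rightarrow> real \<Rightarrow> real \<Rightarrow> real \<Rightarrow> real \<Rightarrow> real \<Rightarrow> real" where
  "Nfun l r \<alpha> \<beta> Q0 A = A - l + sqrt (Q0^2 + A^2) - sqrt (Q0^2 + (Bfun l r \<alpha> \<beta> A)^2)"

end

theory Submission
  imports Defs
begin

text \<open>With \<open>k = (1 - \<beta>) / \<alpha> > 0\<close> the map \<open>B\<close> is affine of slope \<open>-k\<close> with \<open>B l = r\<close>,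
  so \<open>B A - A = (1 + k) (A\<^sup>* - A)\<close>; in particular \<open>A\<^sup>* - l\<close> has the sign of \<open>r - l\<close>.
  The equation \<open>N(Ahat) = 0\<close> says \<open>Ahat - l = S\<^sub>b - S\<^sub>a\<close>, and as \<open>x \<mapsto> sqrt (Q\<^sub>0\<^sup>2 + x\<^sup>2)\<close>
  increases on \<open>[0, \<infinity>)\<close>, \<open>Ahat - l\<close> has the sign of \<open>B Ahat - Ahat\<close>, i.e. of \<open>A\<^sup>* - Ahat\<close>.
  These two gaps add up to \<open>A\<^sup>* - l\<close>, so both have the sign of \<open>r - l\<close>, and applying \<open>B\<close>
  transfers this to the rest: every consecutive gap in \<open>l, Ahat, A\<^sup>*, B Ahat, r\<close> has the
  sign of \<open>r - l\<close>.\<close>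

lemma sgn_mult_pos_left:
  fixes c x :: "'a :: linordered_idom"
  assumes "c > 0"
  shows "sgn (c * x) = sgn x"
  using assms by (simp add: sgn_mult)

lemma sgn_sqrt_diff: "sgn (sqrt a - sqrt b) = sgn (a - b)"
  by (auto simp: sgn_if)

lemma sgn_power2_diff:
  fixes x y :: "'a :: linordered_idom"
  assumes "0 \<le> x" "0 \<le> y"
  shows "sgn (x\<^sup>2 - y\<^sup>2) = sgn (x - y)"
proof (cases "x + y = 0")
  case True
  then have "x = 0" "y = 0" using assms by simp_all
  then show ?thesis by simp
next
  case False
  then have "x + y > 0" using assms by simp
  moreover have "x\<^sup>2 - y\<^sup>2 = (x + y) * (x - y)" by (simp add: power2_eq_square algebra_simps)
  ultimately show ?thesis by (simp add: sgn_mult_pos_left)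
qed

lemma Bfun_left [simp]: "Bfun l r \<alpha> \<beta> l = r"
  by (simp add: Bfun_def)

lemma Bfun_diff: "Bfun l r \<alpha> \<beta> x - Bfun l r \<alpha> \<beta> y = (1 - \<beta>) / \<alpha> * (y - x)"
  by (simp add: Bfun_def ring_distribs)

lemma Bfun_pos:
  assumes "\<alpha> > 0" "\<beta> < 1" "A < A_M l r \<alpha> \<beta>"
  shows "Bfun l r \<alpha> \<beta> A > 0"
proof -
  have "Bfun l r \<alpha> \<beta> A = (1 - \<beta>) / \<alpha> * (A_M l r \<alpha> \<beta> - A)"
    using assms by (simp add: Bfun_def A_M_def field_simps)
  then show ?thesis using assms by simp
qed

lemma Bfun_minus_self:
  assumes "Bfun l r \<alpha> \<beta> Astar = Astar"
  shows "Bfun l r \<alpha> \<beta> A - A = (1 + (1 - \<beta>) / \<alpha>) * (Astar - A)"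
  using Bfun_diff[of l r \<alpha> \<beta> A Astar] assms by (simp add: algebra_simps)

lemma sgn_Nfun_root:
  assumes "Nfun l r \<alpha> \<beta> Q0 A = 0" "0 \<le> A" "0 \<le> Bfun l r \<alpha> \<beta> A"
  shows "sgn (A - l) = sgn (Bfun l r \<alpha> \<beta> A - A)"
proof -
  let ?B = "Bfun l r \<alpha> \<beta> A"
  have "A - l = sqrt (Q0\<^sup>2 + ?B\<^sup>2) - sqrt (Q0\<^sup>2 + A\<^sup>2)"
    using assms(1) by (simp add: Nfun_def algebra_simps)
  then have "sgn (A - l) = sgn (?B\<^sup>2 - A\<^sup>2)" by (simp add: sgn_sqrt_diff)
  then show ?thesis using assms(2,3) by (simp add: sgn_power2_diff)
qed

lemma sgn_gaps_eq_sgn_r_minus_l: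
  assumes "0 < \<alpha>" "\<beta> < 1"
    and "Bfun l r \<alpha> \<beta> Astar = Astar"
    and "0 < Ahat" "Ahat < A_M l r \<alpha> \<beta>" "Nfun l r \<alpha> \<beta> Q0 Ahat = 0"
  shows "sgn (Ahat - l) = sgn (r - l)" and "sgn (Astar - Ahat) = sgn (r - l)"
    and "sgn (Bfun l r \<alpha> \<beta> Ahat - Astar) = sgn (r - l)"
    and "sgn (r - Bfun l r \<alpha> \<beta> Ahat) = sgn (r - l)"
proof -
  let ?B = "Bfun l r \<alpha> \<beta>"
  have k: "(1 - \<beta>) / \<alpha> > 0" using assms(1,2) by simp
  have sgn_fixed_gap: "sgn (?B A - A) = sgn (Astar - A)" for A
    using Bfun_minus_self[OF assms(3)] k by (simp add: sgn_mult_pos_left)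
  have star: "sgn (Astar - l) = sgn (r - l)"
    using sgn_fixed_gap[of l] by simp
  have hat: "sgn (Ahat - l) = sgn (Astar - Ahat)"
    using sgn_Nfun_root[OF assms(6)] Bfun_pos[OF assms(1,2,5)] assms(4) sgn_fixed_gap
    by simp
  have "Astar - l = (Astar - Ahat) + (Ahat - l)" by simp
  then have "sgn (Astar - l) = sgn (Ahat - l)"
    using same_sgn_sgn_add[OF hat] hat by simp
  then show hat_l: "sgn (Ahat - l) = sgn (r - l)" and hat_star: "sgn (Astar - Ahat) = sgn (r - l)"
    using star hat by simp_all
  show "sgn (?B Ahat - Astar) = sgn (r - l)"
    using Bfun_diff[of l r \<alpha> \<beta> Ahat Astar] assms(3) hat_star
    by (simp only: sgn_mult_pos_left[OF k])
  show "sgn (r - ?B Ahat) = sgn (r - l)"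
    using Bfun_diff[of l r \<alpha> \<beta> l Ahat] hat_l by (simp only: Bfun_left sgn_mult_pos_left[OF k])
qed

theorem lemma3p10:
  fixes l r \<alpha> \<beta> Q0 Astar Ahat :: real
  assumes "l > 0" and "r > 0" and "0 < \<alpha>" and "\<alpha> < \<beta>" and "\<beta> < 1"
    and "0 < Astar" and "Astar < A_M l r \<alpha> \<beta>" and "Bfun l r \<alpha> \<beta> Astar = Astar"
    and "0 < Ahat" and "Ahat < A_M l r \<alpha> \<beta>" and "Nfun l r \<alpha> \<beta> Q0 Ahat = 0"
  shows "(l < r \<longrightarrow> l < Ahat \<and> Ahat < Astar \<and> Astar = Bfun l r \<alpha> \<beta> Astar
              \<and> Bfun l r \<alpha> \<beta> Astar < Bfun l r \<alpha> \<beta> Ahat \<and> Bfun l r \<alpha> \<beta> Ahat < r)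
       \<and> (l > r \<longrightarrow> l > Ahat \<and> Ahat > Astar \<and> Astar = Bfun l r \<alpha> \<beta> Astar
              \<and> Bfun l r \<alpha> \<beta> Astar > Bfun l r \<alpha> \<beta> Ahat \<and> Bfun l r \<alpha> \<beta> Ahat > r)
       \<and> (l = r \<longrightarrow> Ahat = Bfun l r \<alpha> \<beta> Ahat \<and> Bfun l r \<alpha> \<beta> Ahat = Astar
              \<and> Astar = Bfun l r \<alpha> \<beta> Astar \<and> Bfun l r \<alpha> \<beta> Astar = l \<and> l = r)"
  using sgn_gaps_eq_sgn_r_minus_l[OF assms(3,5,8-11)] assms(8)
  by (auto simp: sgn_if split: if_splits)

end
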